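(* Let $\alpha>0$, $V=(V_1,\dots,V_n)\in[0,M]^n$ and $f\in\mathcal{H}_\alpha(M)$, and set $x_i=i/n$. Let $W_i=V_{i+1}+V_i$ and $\delta_i=f(x_{i+1})-f(x_i)$ for $1\le i\le n-1$, with averages $\bar W_n=\frac1{n-1}\sum_{i=1}^{n-1}W_i$, $\overline{\delta^2_n}=\frac1{n-1}\sum_{i=1}^{n-1}\delta_i^2$; let $\tilde W_i=V_{i+2}+V_i$ and $\tilde\delta_i=f(x_{i+2})-f(x_i)$ for $1\le i\le n-2$. Define $$T=\frac1n\sum_{i=1}^{n-1}(W_i+\delta_i^2-\bar W_n-\overline{\delta^2_n})^2,$$ $$\tilde T_1=\frac1n\sum_{i=1}^{n-3}\big(W_{i+1}+\delta_{i+1}^2-V_i-V_{i+3}-(f(x_{i+3})-f(x_i))^2\big)^2,$$ $$\tilde T_2=\frac1n\sum_{i=1}^{n-3}(\tilde W_{i+1}+\tilde\delta_{i+1}^2-\tilde W_i-\tilde\delta_i^2)^2 .$$ Then, with $\bar V_n=\frac1n\sum_{i=1}^nV_i$, $$\frac1n\sum_{i=1}^n(V_i-\bar V_n)^2\lesssim n^{-1}+n^{-4(\alpha\wedge1)}+T+\tilde T_1+\tilde T_2,$$ with an implicit constant not depending on $n,f,V$.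
   Context: $\mathcal{H}_\alpha(M)$: functions $g:[0,1]\to\mathbb{R}$ with $|g^{(\lfloor\alpha\rfloor)}(x)-g^{(\lfloor\alpha\rfloor)}(y)|\le M|x-y|^{\alpha-\lfloor\alpha\rfloor}$ for all $x,y$ and $\|g^{(k)}\|_\infty\le M$ for $k=0,\dots,\lfloor\alpha\rfloor$; $M$ is a fixed sufficiently large constant. $a\lesssim b$ means $a\le Cb$ with $C$ depending only on $\alpha,M$. *)

theory Defs
  imports "HOL-Analysis.Analysis"
begin

definition holder_class :: "real \<Rightarrow> real \<Rightarrow> (real \<Rightarrow> real) \<Rightarrow> bool" where
  "holder_class \<alpha> M g \<longleftrightarrow>
     (\<exists>D :: nat \<Rightarrow> real \<Rightarrow> real.
        (\<forall>x\<in>{0..1}. D 0 x = g x) \<and>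
        (\<forall>k < nat \<lfloor>\<alpha>\<rfloor>. \<forall>x\<in>{0..1}.
            (D k has_real_derivative D (Suc k) x) (at x within {0..1})) \<and>
        (\<forall>k \<le> nat \<lfloor>\<alpha>\<rfloor>. \<forall>x\<in>{0..1}. \<bar>D k x\<bar> \<le> M) \<and>
        (\<forall>x\<in>{0..1}. \<forall>y\<in>{0..1}.
            \<bar>D (nat \<lfloor>\<alpha>\<rfloor>) x - D (nat \<lfloor>\<alpha>\<rfloor>) y\<bar> \<le> M * \<bar>x - y\<bar> powr (\<alpha> - of_int \<lfloor>\<alpha>\<rfloor>)))"

definition xpt :: "nat \<Rightarrow> nat \<Rightarrow> real" where
  "xpt n i = real i / real n"

definition Wv :: "(nat \<Rightarrow> real) \<Rightarrow> nat \<Rightarrow> real" where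
  "Wv V i = V (Suc i) + V i"

definition dlt :: "nat \<Rightarrow> (real \<Rightarrow> real) \<Rightarrow> nat \<Rightarrow> real" where
  "dlt n f i = f (xpt n (Suc i)) - f (xpt n i)"

definition Wt :: "(nat \<Rightarrow> real) \<Rightarrow> nat \<Rightarrow> real" where
  "Wt V i = V (i + 2) + V i"

definition dltt :: "nat \<Rightarrow> (real \<Rightarrow> real) \<Rightarrow> nat \<Rightarrow> real" where
  "dltt n f i = f (xpt n (i + 2)) - f (xpt n i)"

definition Wbar :: "nat \<Rightarrow> (nat \<Rightarrow> real) \<Rightarrow> real" where
  "Wbar n V = (1 / (real n - 1)) * (\<Sum>i=1..n-1. Wv V i)"

definition dlt2bar :: "nat \<Rightarrow> (real \<Rightarrow> real) \<Rightarrow> real" where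
  "dlt2bar n f = (1 / (real n - 1)) * (\<Sum>i=1..n-1. (dlt n f i)^2)"

definition Tstat :: "nat \<Rightarrow> (nat \<Rightarrow> real) \<Rightarrow> (real \<Rightarrow> real) \<Rightarrow> real" where
  "Tstat n V f = (1 / real n) *
     (\<Sum>i=1..n-1. (Wv V i + (dlt n f i)^2 - Wbar n V - dlt2bar n f)^2)"

definition T1stat :: "nat \<Rightarrow> (nat \<Rightarrow> real) \<Rightarrow> (real \<Rightarrow> real) \<Rightarrow> real" where
  "T1stat n V f = (1 / real n) *
     (\<Sum>i=1..n-3. (Wv V (Suc i) + (dlt n f (Suc i))^2 - V i - V (i + 3)
                    - (f (xpt n (i + 3)) - f (xpt n i))^2)^2)"

definition T2stat :: "nat \<Rightarrow> (nat \<Rightarrow> real) \<Rightarrow> (real \<Rightarrow> real) \<Rightarrow> real" where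
  "T2stat n V f = (1 / real n) *
     (\<Sum>i=1..n-3. (Wt V (Suc i) + (dltt n f (Suc i))^2 - Wt V i - (dltt n f i)^2)^2)"

definition Vbar :: "nat \<Rightarrow> (nat \<Rightarrow> real) \<Rightarrow> real" where
  "Vbar n V = (1 / real n) * (\<Sum>i=1..n. V i)"

end

(* With c = (Wbar + dlt2bar) / 2, each summand of T equals 2 (V_i - c) up to the jump
   V_(i+1) - V_i and delta_i^2, while the i-th summands of T1 and T2 add up to
   2 (V_(i+1) - V_i) up to squared increments of f over at most three grid steps.  These
   increments are O(n^-(alpha min 1)) by the Hoelder condition, so summing squares bounds
   sum_i (V_i - c)^2, and hence the empirical variance, by n (T + T1 + T2) plus
   O(n^(1 - 4 (alpha min 1))) plus the O(1) contribution of the indices n - 2, n - 1, n. *)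
theory Submission imports Defs begin

lemma holder_class_nonneg_const:
  assumes "holder_class \<alpha> M f"
  shows "0 \<le> M"
proof -
  obtain D :: "nat \<Rightarrow> real \<Rightarrow> real" where "\<bar>D 0 0\<bar> \<le> M"
    using assms unfolding holder_class_def by fastforce
  then show ?thesis by linarith
qed

lemma holder_class_holder_continuous:
  assumes "holder_class \<alpha> M f" "\<alpha> > 0" "x \<in> {0..1}" "y \<in> {0..1}"
  shows "\<bar>f x - f y\<bar> \<le> M * \<bar>x - y\<bar> powr min \<alpha> 1"
proof -
  obtain D where D0: "\<forall>x\<in>{0..1}. D 0 x = f x"
    and deriv: "\<forall>k < nat \<lfloor>\<alpha>\<rfloor>. \<forall>x\<in>{0..1}.
                  (D k has_real_derivative D (Suc k) x) (at x within {0..1})"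
    and bound: "\<forall>k \<le> nat \<lfloor>\<alpha>\<rfloor>. \<forall>x\<in>{0..1}. \<bar>D k x\<bar> \<le> M"
    and holder: "\<forall>x\<in>{0..1}. \<forall>y\<in>{0..1}.
                  \<bar>D (nat \<lfloor>\<alpha>\<rfloor>) x - D (nat \<lfloor>\<alpha>\<rfloor>) y\<bar> \<le> M * \<bar>x - y\<bar> powr (\<alpha> - of_int \<lfloor>\<alpha>\<rfloor>)"
    using assms(1) unfolding holder_class_def by blast
  show ?thesis
  proof (cases "\<alpha> < 1")
    case True
    then have "\<lfloor>\<alpha>\<rfloor> = 0" using assms(2) by (simp add: floor_eq_iff)
    then show ?thesis using holder D0 assms(3,4) True by auto
  next
    case False
    then have has_deriv: "0 < nat \<lfloor>\<alpha>\<rfloor>" by simp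
    have "norm (D 0 x - D 0 y) \<le> M * norm (x - y)"
    proof (rule differentiable_bound[where f' = "\<lambda>z h. D 1 z * h" and S = "{0..1}"])
      fix z :: real assume z: "z \<in> {0..1}"
      show "(D 0 has_derivative (\<lambda>h. D 1 z * h)) (at z within {0..1})"
        using deriv has_deriv z by (metis One_nat_def has_field_derivative_def)
      have "\<bar>D 1 z\<bar> \<le> M" using bound has_deriv z by (metis One_nat_def Suc_leI)
      then show "onorm (\<lambda>h. D 1 z * h) \<le> M"
        by (intro onorm_bound) (auto simp: abs_mult mult_right_mono)
    qed (use assms in auto)
    then show ?thesis using D0 assms(3,4) False by simp
  qed
qed

lemma holder_class_design_increment:
  assumes "holder_class \<alpha> M f" "\<alpha> > 0" "i + k \<le> n"
  shows "\<bar>f (xpt n (i + k)) - f (xpt n i)\<bar> \<le> real k * M * real n powr (- min \<alpha> 1)"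
proof (cases "k = 0")
  case False
  let ?\<beta> = "min \<alpha> 1"
  have n: "real n > 0" using assms(3) False by simp
  have M: "0 \<le> M" using holder_class_nonneg_const[OF assms(1)] .
  have "xpt n (i + k) \<in> {0..1}" "xpt n i \<in> {0..1}"
    using assms(3) n by (auto simp: xpt_def)
  then have "\<bar>f (xpt n (i + k)) - f (xpt n i)\<bar> \<le> M * (real k / real n) powr ?\<beta>"
    using holder_class_holder_continuous[OF assms(1,2)] n
    by (fastforce simp: xpt_def diff_divide_distrib[symmetric])
  also have "(real k / real n) powr ?\<beta> = real k powr ?\<beta> * real n powr (- ?\<beta>)"
    by (simp add: powr_divide powr_minus_divide)
  also have "real k powr ?\<beta> \<le> real k"
    using powr_mono[of ?\<beta> 1 "real k"] False by simp
  finally show ?thesis using M n by (simp add: mult_left_mono mult_right_mono mult_ac)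
qed simp

definition increments_sq_bounded :: "nat \<Rightarrow> (real \<Rightarrow> real) \<Rightarrow> real \<Rightarrow> bool" where
  "increments_sq_bounded n f q \<longleftrightarrow>
     (\<forall>j k. j + k \<le> n \<longrightarrow> k \<le> 3 \<longrightarrow> (f (xpt n (j + k)) - f (xpt n j))^2 \<le> q)"

lemma increments_sq_boundedD:
  "increments_sq_bounded n f q \<Longrightarrow> j + k \<le> n \<Longrightarrow> k \<le> 3 \<Longrightarrow>
     (f (xpt n (j + k)) - f (xpt n j))^2 \<le> q"
  unfolding increments_sq_bounded_def by blast

lemma increments_sq_bounded_nonneg: "increments_sq_bounded n f q \<Longrightarrow> 0 \<le> q"
  using increments_sq_boundedD[of n f q 0 0] by simp

lemma increments_sq_bounded_dlt:
  "increments_sq_bounded n f q \<Longrightarrow> Suc i \<le> n \<Longrightarrow> (dlt n f i)^2 \<le> q"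
  using increments_sq_boundedD[of n f q i 1] by (simp add: dlt_def)

lemma increments_sq_bounded_dltt:
  "increments_sq_bounded n f q \<Longrightarrow> i + 2 \<le> n \<Longrightarrow> (dltt n f i)^2 \<le> q"
  using increments_sq_boundedD[of n f q i 2] by (simp add: dltt_def)

lemma holder_class_increments_sq_bounded:
  assumes "holder_class \<alpha> M f" "\<alpha> > 0"
  shows "increments_sq_bounded n f ((3 * M * real n powr (- min \<alpha> 1))^2)"
  unfolding increments_sq_bounded_def
proof (intro allI impI)
  fix j k assume "j + k \<le> n" "k \<le> 3"
  have "0 \<le> M" using assms(1) by (rule holder_class_nonneg_const)
  have "\<bar>f (xpt n (j + k)) - f (xpt n j)\<bar> \<le> real k * M * real n powr (- min \<alpha> 1)"
    using holder_class_design_increment[OF assms \<open>j + k \<le> n\<close>] .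
  also have "\<dots> \<le> 3 * M * real n powr (- min \<alpha> 1)"
    using \<open>k \<le> 3\<close> \<open>0 \<le> M\<close> by (intro mult_right_mono) auto
  finally show "(f (xpt n (j + k)) - f (xpt n j))^2 \<le> (3 * M * real n powr (- min \<alpha> 1))^2"
    by (metis abs_ge_zero power2_abs power_mono)
qed

definition Tsummand :: "nat \<Rightarrow> (nat \<Rightarrow> real) \<Rightarrow> (real \<Rightarrow> real) \<Rightarrow> nat \<Rightarrow> real" where
  "Tsummand n V f i = Wv V i + (dlt n f i)^2 - Wbar n V - dlt2bar n f"

definition T1summand :: "nat \<Rightarrow> (nat \<Rightarrow> real) \<Rightarrow> (real \<Rightarrow> real) \<Rightarrow> nat \<Rightarrow> real" where
  "T1summand n V f i = Wv V (Suc i) + (dlt n f (Suc i))^2 - V i - V (i + 3)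
                        - (f (xpt n (i + 3)) - f (xpt n i))^2"

definition T2summand :: "nat \<Rightarrow> (nat \<Rightarrow> real) \<Rightarrow> (real \<Rightarrow> real) \<Rightarrow> nat \<Rightarrow> real" where
  "T2summand n V f i = Wt V (Suc i) + (dltt n f (Suc i))^2 - Wt V i - (dltt n f i)^2"

lemma Tstat_eq_sum: "real n * Tstat n V f = (\<Sum>i=1..n-1. (Tsummand n V f i)^2)"
  by (cases "n = 0") (simp_all add: Tstat_def Tsummand_def)

lemma T1stat_eq_sum: "real n * T1stat n V f = (\<Sum>i=1..n-3. (T1summand n V f i)^2)"
  by (cases "n = 0") (simp_all add: T1stat_def T1summand_def)

lemma T2stat_eq_sum: "real n * T2stat n V f = (\<Sum>i=1..n-3. (T2summand n V f i)^2)"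
  by (cases "n = 0") (simp_all add: T2stat_def T2summand_def)

lemma sq_half_sum3_le:
  fixes x y z :: real
  shows "((x + y + z) / 2)^2 \<le> x^2 + y^2 + z^2"
proof -
  have "0 \<le> (x - y)^2 + (y - z)^2 + (x - z)^2 + x^2 + y^2 + z^2" by simp
  then show ?thesis by (simp add: power2_eq_square field_simps)
qed

lemma sq_dev_center_le_Tsummand:
  "(V i - (Wbar n V + dlt2bar n f) / 2)^2
     \<le> (Tsummand n V f i)^2 + (V (Suc i) - V i)^2 + ((dlt n f i)^2)^2"
proof -
  have "V i - (Wbar n V + dlt2bar n f) / 2
          = (Tsummand n V f i + - (V (Suc i) - V i) + - ((dlt n f i)^2)) / 2"
    by (simp add: Tsummand_def Wv_def field_simps)
  then have "(V i - (Wbar n V + dlt2bar n f) / 2)^2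
               \<le> (Tsummand n V f i)^2 + (- (V (Suc i) - V i))^2 + (- ((dlt n f i)^2))^2"
    using sq_half_sum3_le by presburger
  then show ?thesis by (simp add: power2_commute[of "V i"])
qed

lemma double_increment_eq_T1_T2_summands:
  "2 * (V (Suc i) - V i) = T1summand n V f i + T2summand n V f i
     - ((dlt n f (Suc i))^2 - (f (xpt n (i + 3)) - f (xpt n i))^2
        + (dltt n f (Suc i))^2 - (dltt n f i)^2)"
  by (simp add: T1summand_def T2summand_def Wv_def Wt_def algebra_simps numeral_eq_Suc)

lemma sq_increment_le_T1_T2_summands:
  assumes "increments_sq_bounded n f q" "i + 3 \<le> n"
  shows "(V (Suc i) - V i)^2 \<le> (T1summand n V f i)^2 + (T2summand n V f i)^2 + 4 * q^2"
proof -
  define E where "E = (dlt n f (Suc i))^2 - (f (xpt n (i + 3)) - f (xpt n i))^2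
                        + (dltt n f (Suc i))^2 - (dltt n f i)^2"
  have "(dlt n f (Suc i))^2 \<le> q" "(f (xpt n (i + 3)) - f (xpt n i))^2 \<le> q"
       "(dltt n f (Suc i))^2 \<le> q" "(dltt n f i)^2 \<le> q"
    using assms increments_sq_bounded_dlt increments_sq_bounded_dltt increments_sq_boundedD
    by auto
  then have "\<bar>E\<bar> \<le> 2 * q" unfolding E_def
    by (smt (verit) zero_le_power2)
  then have "E^2 \<le> 4 * q^2"
    using abs_le_square_iff[of E "2 * q"] by (simp add: power_mult_distrib)
  have "V (Suc i) - V i = (T1summand n V f i + T2summand n V f i + - E) / 2"
    using double_increment_eq_T1_T2_summands[of V i n f] unfolding E_def by simp
  then have "(V (Suc i) - V i)^2 \<le> (T1summand n V f i)^2 + (T2summand n V f i)^2 + (- E)^2"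
    using sq_half_sum3_le by presburger
  with \<open>E^2 \<le> 4 * q^2\<close> show ?thesis by simp
qed

lemma sum_sq_dev_Vbar_le:
  assumes "n \<ge> 1"
  shows "(\<Sum>i=1..n. (V i - Vbar n V)^2) \<le> (\<Sum>i=1..n. (V i - c)^2)"
proof -
  let ?m = "Vbar n V"
  have "(\<Sum>i=1..n. (V i - c)^2)
          = (\<Sum>i=1..n. (V i - ?m)^2 + 2 * (?m - c) * (V i - ?m) + (?m - c)^2)"
    by (intro sum.cong) (auto simp: power2_eq_square algebra_simps)
  also have "\<dots> = (\<Sum>i=1..n. (V i - ?m)^2) + 2 * (?m - c) * (\<Sum>i=1..n. V i - ?m)
                    + real n * (?m - c)^2"
    by (simp add: sum.distrib sum_distrib_left)
  also have "(\<Sum>i=1..n. V i - ?m) = 0"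
    using assms by (simp add: sum_subtractf Vbar_def)
  finally show ?thesis by simp
qed

lemma average_bounds:
  fixes g :: "nat \<Rightarrow> real"
  assumes "\<forall>i\<in>{1..m}. 0 \<le> g i \<and> g i \<le> b" "0 \<le> b"
  shows "0 \<le> (\<Sum>i=1..m. g i) / real m \<and> (\<Sum>i=1..m. g i) / real m \<le> b"
proof (cases "m = 0")
  case False
  have "(\<Sum>i=1..m. g i) \<le> real m * b"
    using sum_bounded_above[of "{1..m}" g b] assms by simp
  moreover have "0 \<le> (\<Sum>i=1..m. g i)" using assms by (intro sum_nonneg) auto
  ultimately show ?thesis using False by (simp add: divide_le_eq mult.commute)
qed (simp add: assms)

lemma center_bounds:
  assumes "n \<ge> 1" "\<forall>i\<in>{1..n}. V i \<in> {0..M}" "increments_sq_bounded n f q"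
  shows "0 \<le> (Wbar n V + dlt2bar n f) / 2" "(Wbar n V + dlt2bar n f) / 2 \<le> M + q / 2"
proof -
  have avg: "Wbar n V = (\<Sum>i=1..n-1. Wv V i) / real (n - 1)"
            "dlt2bar n f = (\<Sum>i=1..n-1. (dlt n f i)^2) / real (n - 1)"
    using assms(1) by (simp_all add: Wbar_def dlt2bar_def of_nat_diff)
  have "0 \<le> M" using assms(1,2) by force
  moreover have "0 \<le> Wv V i \<and> Wv V i \<le> 2 * M" if "i \<in> {1..n-1}" for i
  proof -
    have "V i \<in> {0..M}" "V (Suc i) \<in> {0..M}" using assms(2) that by auto
    then show ?thesis by (simp add: Wv_def)
  qed
  ultimately have "0 \<le> Wbar n V \<and> Wbar n V \<le> 2 * M"
    unfolding avg by (intro average_bounds) auto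
  moreover have "0 \<le> dlt2bar n f \<and> dlt2bar n f \<le> q"
    unfolding avg using assms(3) increments_sq_bounded_dlt increments_sq_bounded_nonneg
    by (intro average_bounds) auto
  ultimately show "0 \<le> (Wbar n V + dlt2bar n f) / 2" "(Wbar n V + dlt2bar n f) / 2 \<le> M + q / 2"
    by auto
qed

lemma sum_le_sum_drop_last_two:
  fixes g :: "nat \<Rightarrow> real"
  assumes "\<forall>i\<in>{1..m}. g i \<le> b" "0 \<le> b"
  shows "(\<Sum>i=1..m. g i) \<le> (\<Sum>i=1..m-2. g i) + 2 * b"
proof -
  let ?R = "{1..m} - {1..m-2}"
  have "card ?R \<le> card {m - 1, m}"
    by (intro card_mono) auto
  then have card_le: "card ?R \<le> 2"
    using card_insert_le_m1[of 2 "{m}" "m - 1"] by simp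
  have "(\<Sum>i=1..m. g i) = (\<Sum>i=1..m-2. g i) + (\<Sum>i\<in>?R. g i)"
    using sum.subset_diff[of "{1..m-2}" "{1..m}" g] by auto
  also have "(\<Sum>i\<in>?R. g i) \<le> real (card ?R) * b"
    using sum_bounded_above[of ?R g b] assms(1) by auto
  also have "\<dots> \<le> 2 * b"
    using card_le assms(2) by (simp add: mult_right_mono)
  finally show ?thesis by simp
qed

lemma sum_sq_dev_center_le:
  assumes "increments_sq_bounded n f q"
  shows "(\<Sum>i=1..n-1. (V i - (Wbar n V + dlt2bar n f) / 2)^2)
           \<le> real n * Tstat n V f + (\<Sum>i=1..n-1. (V (Suc i) - V i)^2) + real n * q^2"
proof -
  have "((dlt n f i)^2)^2 \<le> q^2" if "i \<in> {1..n-1}" for i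
    using that increments_sq_bounded_dlt[OF assms, of i] by (intro power_mono) auto
  then have "(\<Sum>i=1..n-1. ((dlt n f i)^2)^2) \<le> real (n - 1) * q^2"
    using sum_bounded_above[of "{1..n-1}" "\<lambda>i. ((dlt n f i)^2)^2"] by simp
  also have "\<dots> \<le> real n * q^2" by (intro mult_right_mono) auto
  finally have "(\<Sum>i=1..n-1. ((dlt n f i)^2)^2) \<le> real n * q^2" .
  moreover have "(\<Sum>i=1..n-1. (V i - (Wbar n V + dlt2bar n f) / 2)^2)
      \<le> (\<Sum>i=1..n-1. (Tsummand n V f i)^2 + (V (Suc i) - V i)^2 + ((dlt n f i)^2)^2)"
    by (intro sum_mono sq_dev_center_le_Tsummand)
  ultimately show ?thesis by (simp add: sum.distrib Tstat_eq_sum)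
qed

lemma sum_sq_increment_le:
  assumes "increments_sq_bounded n f q"
  shows "(\<Sum>i=1..n-3. (V (Suc i) - V i)^2)
           \<le> real n * T1stat n V f + real n * T2stat n V f + real n * (4 * q^2)"
proof -
  have "(\<Sum>i=1..n-3. (V (Suc i) - V i)^2)
          \<le> (\<Sum>i=1..n-3. (T1summand n V f i)^2 + (T2summand n V f i)^2 + 4 * q^2)"
    using assms by (intro sum_mono sq_increment_le_T1_T2_summands) auto
  also have "\<dots> = real n * T1stat n V f + real n * T2stat n V f + real (n - 3) * (4 * q^2)"
    by (simp add: sum.distrib T1stat_eq_sum T2stat_eq_sum)
  also have "\<dots> \<le> real n * T1stat n V f + real n * T2stat n V f + real n * (4 * q^2)"
    by (intro add_left_mono mult_right_mono) auto
  finally show ?thesis .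
qed

lemma sum_sq_dev_Vbar_le_stats:
  assumes n: "n \<ge> 1" and V: "\<forall>i\<in>{1..n}. V i \<in> {0..M}"
    and incr: "increments_sq_bounded n f q"
  shows "(\<Sum>i=1..n. (V i - Vbar n V)^2)
           \<le> real n * (Tstat n V f + T1stat n V f + T2stat n V f + 5 * q^2) + (M + q)^2 + 2 * M^2"
proof -
  define c where "c = (Wbar n V + dlt2bar n f) / 2"
  have "0 \<le> q" using incr by (rule increments_sq_bounded_nonneg)
  have "(\<Sum>i=1..n. (V i - Vbar n V)^2) \<le> (\<Sum>i=1..n. (V i - c)^2)"
    using n by (rule sum_sq_dev_Vbar_le)
  also have "\<dots> = (\<Sum>i=1..n-1. (V i - c)^2) + (V n - c)^2"
    using n by (cases n) (simp_all add: sum.cl_ivl_Suc)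
  finally have split: "(\<Sum>i=1..n. (V i - Vbar n V)^2) \<le> (\<Sum>i=1..n-1. (V i - c)^2) + (V n - c)^2" .
  have "\<forall>i\<in>{1..n-1}. (V (Suc i) - V i)^2 \<le> M^2"
  proof
    fix i assume "i \<in> {1..n-1}"
    then have "V i \<in> {0..M}" "V (Suc i) \<in> {0..M}" using V by auto
    then show "(V (Suc i) - V i)^2 \<le> M^2"
      using abs_le_square_iff[of "V (Suc i) - V i" M] by auto
  qed
  then have boundary: "(\<Sum>i=1..n-1. (V (Suc i) - V i)^2) \<le> (\<Sum>i=1..n-3. (V (Suc i) - V i)^2) + 2 * M^2"
    using sum_le_sum_drop_last_two[of "n - 1" "\<lambda>i. (V (Suc i) - V i)^2" "M^2"]
    by (simp add: numeral_3_eq_3)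
  have "V n \<in> {0..M}" "0 \<le> c" "c \<le> M + q / 2"
    using V n center_bounds[OF n V incr] unfolding c_def by auto
  then have last: "(V n - c)^2 \<le> (M + q)^2"
    using \<open>0 \<le> q\<close> abs_le_square_iff[of "V n - c" "M + q"] by auto
  show ?thesis
    using split boundary last sum_sq_dev_center_le[OF incr, of V] sum_sq_increment_le[OF incr, of V]
    unfolding c_def by (simp add: algebra_simps)
qed

lemma mean_sq_dev_Vbar_le_explicit:
  assumes "\<alpha> > 0" "n \<ge> 1" "\<forall>i\<in>{1..n}. V i \<in> {0..M}" "holder_class \<alpha> M f"
  shows "(1 / real n) * (\<Sum>i=1..n. (V i - Vbar n V)^2)
           \<le> Tstat n V f + T1stat n V f + T2stat n V f + 405 * M^4 * real n powr (- 4 * min \<alpha> 1)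
              + ((M + 9 * M^2)^2 + 2 * M^2) / real n"
proof -
  define h where "h = real n powr (- min \<alpha> 1)"
  define q where "q = (3 * M * h)^2"
  have "0 \<le> M" using assms(4) by (rule holder_class_nonneg_const)
  have "0 \<le> h" "h \<le> 1"
    unfolding h_def using assms(1,2) powr_mono[of "- min \<alpha> 1" 0 "real n"] by simp_all
  then have "q \<le> 9 * M^2"
    unfolding q_def using power_le_one[of h 2] by (simp add: power_mult_distrib mult_left_le)
  then have "(M + q)^2 + 2 * M^2 \<le> (M + 9 * M^2)^2 + 2 * M^2"
    using \<open>0 \<le> M\<close> q_def by (intro add_right_mono power_mono) auto
  moreover have "h^4 = real n powr (- 4 * min \<alpha> 1)"
    unfolding h_def using assms(2) powr_power[of "real n" "- min \<alpha> 1" 4] by simp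
  then have "5 * q^2 = 405 * M^4 * real n powr (- 4 * min \<alpha> 1)"
    unfolding q_def by (simp add: power_mult_distrib power_mult[symmetric])
  moreover have "(\<Sum>i=1..n. (V i - Vbar n V)^2)
      \<le> real n * (Tstat n V f + T1stat n V f + T2stat n V f + 5 * q^2) + ((M + q)^2 + 2 * M^2)"
    using sum_sq_dev_Vbar_le_stats[OF assms(2,3) holder_class_increments_sq_bounded[OF assms(4,1)]]
    unfolding q_def h_def by (simp add: algebra_simps)
  ultimately show ?thesis
    using assms(2) by (simp add: field_simps)
qed

theorem proposition4p2:
  fixes \<alpha> M :: real
  assumes "\<alpha> > 0" and "M > 0"
  shows "\<exists>C > 0. \<forall>(n::nat) (V::nat \<Rightarrow> real) (f::real \<Rightarrow> real).
           n \<ge> 1 \<longrightarrow> (\<forall>i\<in>{1..n}. V i \<in> {0..M}) \<longrightarrow> holder_class \<alpha> M f \<longrightarrow>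
           (1 / real n) * (\<Sum>i=1..n. (V i - Vbar n V)^2)
             \<le> C * (1 / real n + real n powr (- 4 * min \<alpha> 1)
                    + Tstat n V f + T1stat n V f + T2stat n V f)"
proof (intro exI[of _ "1 + ((M + 9 * M^2)^2 + 2 * M^2) + 405 * M^4"] conjI allI impI)
  fix n :: nat and V :: "nat \<Rightarrow> real" and f :: "real \<Rightarrow> real"
  assume n: "n \<ge> 1" and V: "\<forall>i\<in>{1..n}. V i \<in> {0..M}" and f: "holder_class \<alpha> M f"
  define K0 where "K0 = (M + 9 * M^2)^2 + 2 * M^2"
  define T where "T = Tstat n V f + T1stat n V f + T2stat n V f"
  define P where "P = real n powr (- 4 * min \<alpha> 1)"
  have "0 \<le> T" unfolding T_def Tstat_def T1stat_def T2stat_def by (simp add: sum_nonneg)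
  have "(1 / real n) * (\<Sum>i=1..n. (V i - Vbar n V)^2) \<le> T + 405 * M^4 * P + K0 * (1 / real n)"
    using mean_sq_dev_Vbar_le_explicit[OF assms(1) n V f] unfolding T_def P_def K0_def by simp
  also have "\<dots> \<le> (1 + K0 + 405 * M^4) * (1 / real n + P + T)"
    using \<open>0 \<le> T\<close> by (simp add: P_def K0_def algebra_simps add_increasing2 mult_right_mono)
  finally show "(1 / real n) * (\<Sum>i=1..n. (V i - Vbar n V)^2)
      \<le> (1 + K0 + 405 * M^4) * (1 / real n + real n powr (- 4 * min \<alpha> 1)
           + Tstat n V f + T1stat n V f + T2stat n V f)"
    unfolding P_def T_def by (simp add: algebra_simps)
qed (simp add: add_pos_nonneg)

end
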